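(* Let $a,b\in\mathcal{A}$ be distinct letters with $p_a>0$ and $p_b>0$, let $S$ be a scoring function and $T$ the associated function defined in the context. If there exists $\epsilon>0$ with $$\lambda(S)-\lambda(S-\epsilon T)>0,$$ then $\mathrm{VAR}[L_n(S)]=\Theta(n)$.
   Context: Let $\mathcal{A}$ be a finite alphabet and $\mathcal{A}^*=\mathcal{A}\cup\{G\}$, where $G$ is a gap symbol. A scoring function is a symmetric map $S:\mathcal{A}^*\times\mathcal{A}^*\to\mathbb{R}$. For strings $x=x_1\dots x_m$, $y=y_1\dots y_{m'}$ over $\mathcal{A}$, an alignment $\pi$ is a sequence $((\mu_1,\nu_1),\dots,(\mu_k,\nu_k))$, $k\ge0$, with $1\le\mu_1<\dots<\mu_k\le m$ and $1\le\nu_1<\dots<\nu_k\le m'$; its score is $S_\pi(x,y)=\sum_{i=1}^k S(x_{\mu_i},y_{\nu_i})+\sum_{j\notin\{\mu_i\}}S(x_j,G)+\sum_{j\notin\{\nu_i\}}S(G,y_j)$, and $L_S(x,y)=\max_\pi S_\pi(x,y)$. Let $X=X_1\dots X_n$, $Y=Y_1\dots Y_n$ where all $2n$ letters are i.i.d. with $P(X_i=c)=P(Y_j=c)=p_c$. Put $L_n(S)=L_S(X,Y)$, $\lambda_n(S)=E[L_n(S)]/n$, $\lambda(S)=\lim_n\lambda_n(S)$ (the limit exists). The function $T:\mathcal{A}^*\times\mathcal{A}^*\to\mathbb{R}$ is defined by $T(a,c)=T(c,a)=S(b,c)-S(a,c)$ for all $c\in\mathcal{A}^*$ with $c\neq a$,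 $T(a,a)=2(S(b,a)-S(a,a))$, and $T(d,c)=0$ whenever $d\neq a$ and $c\neq a$; $S-\epsilon T$ is the pointwise combination. *)

theory Defs
  imports "HOL-Probability.Probability" "HOL-Library.Landau_Symbols"
begin

text \<open>Letters have type 'a; the extended alphabet A* = A \<union> {G} is 'a option,
 with None playing the role of the gap symbol G.  Positions in strings are 0-indexed.\<close>

definition alignments :: "'a list \<Rightarrow> 'a list \<Rightarrow> (nat \<times> nat) list set" where
  "alignments x y = {\<pi>. sorted_wrt (\<lambda>(i, j) (k, l). i < k \<and> j < l) \<pi> \<and>
      (\<forall>(i, j) \<in> set \<pi>. i < length x \<and> j < length y)}"

definition align_score ::
  "('a option \<Rightarrow> 'a option \<Rightarrow> real) \<Rightarrow> 'a list \<Rightarrow> 'a list \<Rightarrow> (nat \<times> nat) list \<Rightarrow> real" where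
  "align_score S x y \<pi> =
     (\<Sum>(i, j) \<leftarrow> \<pi>. S (Some (x ! i)) (Some (y ! j)))
     + (\<Sum>i \<in> {..<length x} - fst ` set \<pi>. S (Some (x ! i)) None)
     + (\<Sum>j \<in> {..<length y} - snd ` set \<pi>. S None (Some (y ! j)))"

definition L_S :: "('a option \<Rightarrow> 'a option \<Rightarrow> real) \<Rightarrow> 'a list \<Rightarrow> 'a list \<Rightarrow> real" where
  "L_S S x y = Max (align_score S x y ` alignments x y)"

definition XY_pmf :: "'a pmf \<Rightarrow> nat \<Rightarrow> ('a list \<times> 'a list) pmf" where
  "XY_pmf p n = pair_pmf (replicate_pmf n p) (replicate_pmf n p)"

definition Ln_mean :: "'a pmf \<Rightarrow> ('a option \<Rightarrow> 'a option \<Rightarrow> real) \<Rightarrow> nat \<Rightarrow> real" where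
  "Ln_mean p S n = measure_pmf.expectation (XY_pmf p n) (\<lambda>(x, y). L_S S x y)"

definition Ln_var :: "'a pmf \<Rightarrow> ('a option \<Rightarrow> 'a option \<Rightarrow> real) \<Rightarrow> nat \<Rightarrow> real" where
  "Ln_var p S n = measure_pmf.variance (XY_pmf p n) (\<lambda>(x, y). L_S S x y)"

definition lambda_n :: "'a pmf \<Rightarrow> ('a option \<Rightarrow> 'a option \<Rightarrow> real) \<Rightarrow> nat \<Rightarrow> real" where
  "lambda_n p S n = Ln_mean p S n / real n"

definition lambda :: "'a pmf \<Rightarrow> ('a option \<Rightarrow> 'a option \<Rightarrow> real) \<Rightarrow> real" where
  "lambda p S = lim (lambda_n p S)"

definition T_fun :: "('a option \<Rightarrow> 'a option \<Rightarrow> real) \<Rightarrow> 'a \<Rightarrow> 'a \<Rightarrow> 'a option \<Rightarrow> 'a option \<Rightarrow> real" where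
  "T_fun S a b d c =
     (if d = Some a \<and> c = Some a then 2 * (S (Some b) (Some a) - S (Some a) (Some a))
      else if d = Some a then S (Some b) c - S (Some a) c
      else if c = Some a then S (Some b) d - S (Some a) d
      else 0)"

end

theory Submission
  imports Defs
begin

text \<open>
  Upper bound: changing one letter moves L_n by at most a constant, so the Efron--Stein
  inequality gives VAR L_n = O(n).

  Lower bound: replacing a letter a by b changes the score of a fixed alignment by exactly
  that letter's contribution to the T-score, so the sum over all letters a of these
  single-letter changes of L_n dominates (L_n(S) - L_n(S - \<epsilon> T)) / \<epsilon>, whose mean grows
  linearly because \<lambda>(S) > \<lambda>(S - \<epsilon> T). A centred weight w on the letters with
  E[h(c) w(c)] = p_a (h(a) - h(b)) turns this expected sum of changes into the covariance of
  L_n with W = \<Sum>i. w(X_i). As VAR W = O(n), Cauchy--Schwarz gives VAR L_n \<ge> c n.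

  The limit \<lambda> exists by Fekete's lemma, since the expected optimal score is superadditive.
\<close>

section \<open>Fekete's lemma\<close>

lemma superadditive_mult:
  fixes a :: "nat \<Rightarrow> real"
  assumes sup: "\<And>m n. a m + a n \<le> a (m + n)"
  shows "real q * a k + a r \<le> a (q * k + r)"
proof (induction q)
  case (Suc q)
  have "a k + a (q * k + r) \<le> a (Suc q * k + r)"
    using sup[of k "q * k + r"] by (simp add: algebra_simps)
  then show ?case using Suc by (simp add: algebra_simps)
qed simp

lemma superadditive_ratio_lower_bound:
  fixes a :: "nat \<Rightarrow> real"
  assumes sup: "\<And>m n. a m + a n \<le> a (m + n)"
    and bnd: "\<And>n. \<bar>a n\<bar> \<le> C * real n"
    and "k > 0" "n > 0"
  shows "a k / real k - (\<bar>a k\<bar> + \<bar>C\<bar> * real k) / real n \<le> a n / real n"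
proof -
  define q where "q = n div k"
  define r where "r = n mod k"
  have n_eq: "n = q * k + r" and "r < k"
    using \<open>k > 0\<close> by (simp_all add: q_def r_def)
  have "\<bar>a r\<bar> \<le> \<bar>C\<bar> * real k"
  proof -
    have "C * real r \<le> \<bar>C\<bar> * real r" by (simp add: mult_right_mono)
    also have "\<dots> \<le> \<bar>C\<bar> * real k" using \<open>r < k\<close> by (simp add: mult_left_mono)
    finally show ?thesis using bnd[of r] by linarith
  qed
  moreover have "real n * (a k / real k) - \<bar>a k\<bar> \<le> real q * a k"
  proof -
    have "real n = real q * real k + real r" using n_eq by simp
    then have "real n * (a k / real k) = real q * a k + real r / real k * a k"
      using \<open>k > 0\<close> by (simp add: field_simps)
    moreover have "\<bar>real r / real k * a k\<bar> \<le> \<bar>a k\<bar>"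
      using \<open>r < k\<close> mult_left_le_one_le[of "\<bar>a k\<bar>" "real r / real k"] by (simp add: abs_mult)
    ultimately show ?thesis by linarith
  qed
  ultimately have "real n * (a k / real k) - (\<bar>a k\<bar> + \<bar>C\<bar> * real k) \<le> a n"
    using superadditive_mult[OF sup, of q k r, folded n_eq] by linarith
  then have "(real n * (a k / real k) - (\<bar>a k\<bar> + \<bar>C\<bar> * real k)) / real n \<le> a n / real n"
    by (rule divide_right_mono) simp
  then show ?thesis
    using \<open>n > 0\<close> by (simp add: diff_divide_distrib)
qed

lemma superadditive_convergent:
  fixes a :: "nat \<Rightarrow> real"
  assumes sup: "\<And>m n. a m + a n \<le> a (m + n)"
    and bnd: "\<And>n. \<bar>a n\<bar> \<le> C * real n"
  shows "convergent (\<lambda>n. a n / real n)"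
proof -
  define s where "s = (SUP n\<in>{1..}. a n / real n)"
  have bdd: "bdd_above ((\<lambda>n. a n / real n) ` {1..})"
    using bnd by (intro bdd_aboveI2[of _ _ C]) (auto simp: divide_le_eq abs_le_iff)
  have le_s: "a n / real n \<le> s" if "n \<ge> 1" for n
    unfolding s_def by (rule cSUP_upper[OF _ bdd]) (use that in auto)
  have "(\<lambda>n. a n / real n) \<longlonglongrightarrow> s"
  proof (rule LIMSEQ_I)
    fix r :: real assume "r > 0"
    then obtain k where "k \<ge> 1" and k: "s - r/2 < a k / real k"
      using less_cSUP_iff[OF _ bdd, of "s - r/2"] unfolding s_def by auto
    define B where "B = \<bar>a k\<bar> + \<bar>C\<bar> * real k"
    obtain N :: nat where N: "2 * B / r < N" using reals_Archimedean2 by blast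
    have "norm (a n / real n - s) < r" if "n \<ge> Suc N" for n
    proof -
      have "2 * B < r * real N"
        using N \<open>r > 0\<close> by (simp add: pos_divide_less_eq mult.commute)
      also have "\<dots> \<le> r * real n"
        using that \<open>r > 0\<close> by simp
      finally have "B / real n < r / 2"
        using that by (simp add: field_simps)
      then have "s - r < a n / real n"
        using superadditive_ratio_lower_bound[OF sup bnd, of k n] k \<open>k \<ge> 1\<close> that
        unfolding B_def by linarith
      then show ?thesis using le_s[of n] that \<open>r > 0\<close> by auto
    qed
    then show "\<exists>N. \<forall>n\<ge>N. norm (a n / real n - s) < r" by blast
  qed
  then show ?thesis unfolding convergent_def by blast
qed

section \<open>Alignments\<close>

lemma alignments_cong_length:
  "length x = length x' \<Longrightarrow> length y = length y' \<Longrightarrow> alignments x y = alignments x' y'"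
  by (simp add: alignments_def)

lemma Nil_in_alignments: "[] \<in> alignments x y"
  by (simp add: alignments_def)

lemma alignment_in_range:
  "\<pi> \<in> alignments x y \<Longrightarrow> (i, j) \<in> set \<pi> \<Longrightarrow> i < length x \<and> j < length y"
  by (auto simp: alignments_def)

lemma alignment_distinct_fst:
  assumes "\<pi> \<in> alignments x y"
  shows "distinct (map fst \<pi>)"
proof -
  have "sorted_wrt (\<lambda>p q. fst p < fst q) \<pi>"
    using assms unfolding alignments_def by (auto elim: sorted_wrt_mono_rel[rotated])
  then have "sorted_wrt (<) (map fst \<pi>)" by (simp add: sorted_wrt_map)
  then show ?thesis by (simp add: strict_sorted_iff)
qed

lemma alignment_transpose:
  assumes "\<pi> \<in> alignments x y"
  shows "map prod.swap \<pi> \<in> alignments y x"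
  using assms unfolding alignments_def
  by (auto simp: sorted_wrt_map elim: sorted_wrt_mono_rel[rotated])

lemma alignment_distinct: "\<pi> \<in> alignments x y \<Longrightarrow> distinct \<pi>"
  using alignment_distinct_fst distinct_map by blast

lemma alignment_length_le:
  assumes "\<pi> \<in> alignments x y"
  shows "length \<pi> \<le> length x"
proof -
  have "length \<pi> = card (fst ` set \<pi>)"
    using distinct_card[OF alignment_distinct_fst[OF assms]] by simp
  also have "\<dots> \<le> card {..<length x}"
    using alignment_in_range[OF assms] by (intro card_mono) auto
  finally show ?thesis by simp
qed

lemma finite_alignments: "finite (alignments x y)"
proof (rule finite_subset)
  show "alignments x y \<subseteq> {\<pi>. set \<pi> \<subseteq> {..<length x} \<times> {..<length y} \<and> distinct \<pi>}"
    using alignment_distinct alignment_in_range by fastforce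
qed (rule finite_subset_distinct, simp)

lemma align_score_transpose:
  "align_score S x y \<pi> = align_score (\<lambda>u v. S v u) y x (map prod.swap \<pi>)"
  by (simp add: align_score_def image_image case_prod_unfold comp_def)

lemma align_score_as_set_sum:
  assumes "\<pi> \<in> alignments x y"
  shows "align_score S x y \<pi> =
      (\<Sum>(i, j) \<in> set \<pi>. S (Some (x ! i)) (Some (y ! j)))
    + (\<Sum>i \<in> {..<length x} - fst ` set \<pi>. S (Some (x ! i)) None)
    + (\<Sum>j \<in> {..<length y} - snd ` set \<pi>. S None (Some (y ! j)))"
  unfolding align_score_def
  by (simp add: sum_list_distinct_conv_sum_set alignment_distinct[OF assms])

lemma align_score_add:
  "align_score (\<lambda>u v. S u v + T u v) x y \<pi> = align_score S x y \<pi> + align_score T x y \<pi>"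
  by (simp add: align_score_def sum_list_addf sum.distrib case_prod_unfold)

lemma align_score_diff_scaled:
  "align_score (\<lambda>u v. S u v - e * T u v) x y \<pi> = align_score S x y \<pi> - e * align_score T x y \<pi>"
  unfolding align_score_def
  by (simp add: sum_list_subtractf sum_subtractf sum_list_const_mult sum_distrib_left
      case_prod_unfold algebra_simps)

lemma align_score_le_L_S: "\<pi> \<in> alignments x y \<Longrightarrow> align_score S x y \<pi> \<le> L_S S x y"
  unfolding L_S_def by (rule Max_ge) (auto simp: finite_alignments)

lemma L_S_attained: "\<exists>\<pi>\<in>alignments x y. L_S S x y = align_score S x y \<pi>"
proof -
  have "L_S S x y \<in> align_score S x y ` alignments x y"
    unfolding L_S_def using Nil_in_alignments by (intro Max_in) (auto simp: finite_alignments)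
  then show ?thesis by auto
qed

lemma L_S_transpose: "L_S S x y = L_S (\<lambda>u v. S v u) y x"
proof -
  have "align_score S x y ` alignments x y = align_score (\<lambda>u v. S v u) y x ` alignments y x"
  proof (intro equalityI image_subsetI)
    fix \<pi> assume "\<pi> \<in> alignments x y"
    then show "align_score S x y \<pi> \<in> align_score (\<lambda>u v. S v u) y x ` alignments y x"
      by (simp add: align_score_transpose[of S] alignment_transpose)
  next
    fix \<sigma> assume "\<sigma> \<in> alignments y x"
    then show "align_score (\<lambda>u v. S v u) y x \<sigma> \<in> align_score S x y ` alignments x y"
      by (simp add: align_score_transpose[of "\<lambda>u v. S v u"] alignment_transpose)
  qed
  then show ?thesis by (simp add: L_S_def)
qed

lemma abs_align_score_le:
  assumes "\<pi> \<in> alignments x y" and M: "\<And>u v. \<bar>S u v\<bar> \<le> M"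
  shows "\<bar>align_score S x y \<pi>\<bar> \<le> M * (2 * length x + length y)"
proof -
  have "M \<ge> 0" using M[of None None] by simp
  have sum_le: "\<bar>\<Sum>i\<in>A. f i\<bar> \<le> M * n" if "\<And>i. \<bar>f i\<bar> \<le> M" "card A \<le> n"
    for A and f :: "_ \<Rightarrow> real" and n :: nat
  proof -
    have "\<bar>\<Sum>i\<in>A. f i\<bar> \<le> real (card A) * M"
      using order_trans[OF sum_abs sum_bounded_above[of A "\<lambda>i. \<bar>f i\<bar>" M]] that(1) by simp
    also have "\<dots> \<le> real n * M" using that(2) \<open>M \<ge> 0\<close> by (simp add: mult_right_mono)
    finally show ?thesis by (simp add: mult.commute)
  qed
  let ?A = "\<Sum>(i, j) \<in> set \<pi>. S (Some (x ! i)) (Some (y ! j))"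
  let ?B = "\<Sum>i \<in> {..<length x} - fst ` set \<pi>. S (Some (x ! i)) None"
  let ?C = "\<Sum>j \<in> {..<length y} - snd ` set \<pi>. S None (Some (y ! j))"
  have "card (set \<pi>) \<le> length x"
    using alignment_length_le[OF assms(1)] card_length[of \<pi>] by linarith
  then have "\<bar>?A\<bar> \<le> M * length x"
    by (rule sum_le[rotated]) (simp add: M case_prod_unfold)
  moreover have "\<bar>?B\<bar> \<le> M * length x"
    using card_mono[OF finite_lessThan Diff_subset, of "length x" "fst ` set \<pi>"]
    by (intro sum_le) (simp_all add: M)
  moreover have "\<bar>?C\<bar> \<le> M * length y"
    using card_mono[OF finite_lessThan Diff_subset, of "length y" "snd ` set \<pi>"]
    by (intro sum_le) (simp_all add: M)
  moreover have "\<bar>?A + ?B + ?C\<bar> \<le> \<bar>?A\<bar> + \<bar>?B\<bar> + \<bar>?C\<bar>"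
    using abs_triangle_ineq[of "?A + ?B" ?C] abs_triangle_ineq[of ?A ?B] by linarith
  ultimately show ?thesis
    unfolding align_score_as_set_sum[OF assms(1)] by (simp add: algebra_simps)
qed

lemma abs_L_S_le:
  "(\<And>u v. \<bar>S u v\<bar> \<le> M) \<Longrightarrow> \<bar>L_S S x y\<bar> \<le> M * (2 * length x + length y)"
  using L_S_attained[of x y S] abs_align_score_le by metis

lemma sum_gaps_append:
  fixes A1 A2 :: "nat set" and f :: "nat \<Rightarrow> real"
  assumes "A1 \<subseteq> {..<n1}"
  shows "(\<Sum>i \<in> {..<n1 + n2} - (A1 \<union> (\<lambda>i. i + n1) ` A2). f i)
       = (\<Sum>i \<in> {..<n1} - A1. f i) + (\<Sum>i \<in> {..<n2} - A2. f (i + n1))"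
proof -
  have shift_mem: "z \<in> (\<lambda>i. i + n1) ` B \<longleftrightarrow> n1 \<le> z \<and> z - n1 \<in> B" for z and B :: "nat set"
    by (auto simp: image_iff intro: bexI[of _ "z - n1"])
  have "{..<n1 + n2} - (A1 \<union> (\<lambda>i. i + n1) ` A2) = ({..<n1} - A1) \<union> (\<lambda>i. i + n1) ` ({..<n2} - A2)"
    using assms by (auto simp: shift_mem)
  then have "(\<Sum>i \<in> {..<n1 + n2} - (A1 \<union> (\<lambda>i. i + n1) ` A2). f i)
      = (\<Sum>i \<in> {..<n1} - A1. f i) + (\<Sum>i \<in> (\<lambda>i. i + n1) ` ({..<n2} - A2). f i)"
    by (simp add: sum.union_disjoint shift_mem disjoint_iff)
  also have "(\<Sum>i \<in> (\<lambda>i. i + n1) ` ({..<n2} - A2). f i) = (\<Sum>i \<in> {..<n2} - A2. f (i + n1))"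
    by (simp add: sum.reindex)
  finally show ?thesis .
qed

definition shift_alignment :: "nat \<Rightarrow> nat \<Rightarrow> (nat \<times> nat) list \<Rightarrow> (nat \<times> nat) list" where
  "shift_alignment m k \<pi> = map (\<lambda>(i, j). (i + m, j + k)) \<pi>"

lemma alignment_append:
  assumes "\<pi>1 \<in> alignments x1 y1" and "\<pi>2 \<in> alignments x2 y2"
  shows "\<pi>1 @ shift_alignment (length x1) (length y1) \<pi>2 \<in> alignments (x1 @ x2) (y1 @ y2)"
proof -
  let ?R = "\<lambda>(i::nat, j::nat) (k, l). i < k \<and> j < l"
  have "sorted_wrt ?R (shift_alignment (length x1) (length y1) \<pi>2)"
    using assms(2) unfolding alignments_def shift_alignment_def sorted_wrt_map
    by (auto elim: sorted_wrt_mono_rel[rotated])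
  then show ?thesis
    using assms unfolding alignments_def by (fastforce simp: sorted_wrt_append shift_alignment_def)
qed

lemma sum_pairs_alignment_append:
  assumes "\<And>i j. (i, j) \<in> set \<pi>1 \<Longrightarrow> i < length x1 \<and> j < length y1"
  shows "(\<Sum>(i, j) \<in> set (\<pi>1 @ shift_alignment (length x1) (length y1) \<pi>2).
            S (Some ((x1 @ x2) ! i)) (Some ((y1 @ y2) ! j)))
       = (\<Sum>(i, j) \<in> set \<pi>1. S (Some (x1 ! i)) (Some (y1 ! j)))
       + (\<Sum>(i, j) \<in> set \<pi>2. S (Some (x2 ! i)) (Some (y2 ! j)))"
proof -
  define sh where "sh = (\<lambda>(i::nat, j::nat). (i + length x1, j + length y1))"
  let ?f = "\<lambda>(i, j). S (Some ((x1 @ x2) ! i)) (Some ((y1 @ y2) ! j))"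
  have "set \<pi>1 \<inter> sh ` set \<pi>2 = {}" using assms by (fastforce simp: sh_def)
  then have "sum ?f (set (\<pi>1 @ map sh \<pi>2)) = sum ?f (set \<pi>1) + sum ?f (sh ` set \<pi>2)"
    by (simp add: sum.union_disjoint)
  also have "sum ?f (sh ` set \<pi>2) = sum (?f \<circ> sh) (set \<pi>2)"
    by (rule sum.reindex) (auto simp: sh_def inj_on_def)
  also have "sum ?f (set \<pi>1) = (\<Sum>(i, j) \<in> set \<pi>1. S (Some (x1 ! i)) (Some (y1 ! j)))"
    using assms by (intro sum.cong) (auto simp: nth_append)
  also have "sum (?f \<circ> sh) (set \<pi>2) = (\<Sum>(i, j) \<in> set \<pi>2. S (Some (x2 ! i)) (Some (y2 ! j)))"
    by (intro sum.cong) (auto simp: sh_def nth_append)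
  finally show ?thesis by (simp add: shift_alignment_def sh_def)
qed

lemma align_score_append:
  assumes p1: "\<pi>1 \<in> alignments x1 y1" and p2: "\<pi>2 \<in> alignments x2 y2"
  shows "align_score S (x1 @ x2) (y1 @ y2) (\<pi>1 @ shift_alignment (length x1) (length y1) \<pi>2)
       = align_score S x1 y1 \<pi>1 + align_score S x2 y2 \<pi>2"
proof -
  let ?\<pi> = "\<pi>1 @ shift_alignment (length x1) (length y1) \<pi>2"
  have in1: "i < length x1 \<and> j < length y1" if "(i, j) \<in> set \<pi>1" for i j
    using alignment_in_range[OF p1 that] .
  have fsts: "fst ` set ?\<pi> = fst ` set \<pi>1 \<union> (\<lambda>i. i + length x1) ` fst ` set \<pi>2"
    by (force simp: shift_alignment_def image_iff)
  have snds: "snd ` set ?\<pi> = snd ` set \<pi>1 \<union> (\<lambda>j. j + length y1) ` snd ` set \<pi>2"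
    by (force simp: shift_alignment_def image_iff)
  have sub1: "fst ` set \<pi>1 \<subseteq> {..<length x1}" and sub2: "snd ` set \<pi>1 \<subseteq> {..<length y1}"
    using in1 by auto
  have gaps_x: "(\<Sum>i \<in> {..<length (x1 @ x2)} - fst ` set ?\<pi>. S (Some ((x1 @ x2) ! i)) None)
      = (\<Sum>i \<in> {..<length x1} - fst ` set \<pi>1. S (Some (x1 ! i)) None)
      + (\<Sum>i \<in> {..<length x2} - fst ` set \<pi>2. S (Some (x2 ! i)) None)"
    unfolding fsts length_append sum_gaps_append[OF sub1]
    by (simp add: nth_append cong: sum.cong_simp)
  have gaps_y: "(\<Sum>j \<in> {..<length (y1 @ y2)} - snd ` set ?\<pi>. S None (Some ((y1 @ y2) ! j)))
      = (\<Sum>j \<in> {..<length y1} - snd ` set \<pi>1. S None (Some (y1 ! j)))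
      + (\<Sum>j \<in> {..<length y2} - snd ` set \<pi>2. S None (Some (y2 ! j)))"
    unfolding snds length_append sum_gaps_append[OF sub2]
    by (simp add: nth_append cong: sum.cong_simp)
  show ?thesis
    using align_score_as_set_sum[OF alignment_append[OF p1 p2], of S]
      align_score_as_set_sum[OF p1, of S] align_score_as_set_sum[OF p2, of S]
      sum_pairs_alignment_append[of \<pi>1 x1 y1 S x2 y2 \<pi>2, OF in1] gaps_x gaps_y
    by linarith
qed

lemma L_S_append_superadditive: "L_S S x1 y1 + L_S S x2 y2 \<le> L_S S (x1 @ x2) (y1 @ y2)"
proof -
  obtain \<pi>1 \<pi>2 where "\<pi>1 \<in> alignments x1 y1" "L_S S x1 y1 = align_score S x1 y1 \<pi>1"
    and "\<pi>2 \<in> alignments x2 y2" "L_S S x2 y2 = align_score S x2 y2 \<pi>2"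
    using L_S_attained by metis
  then show ?thesis
    using align_score_le_L_S[OF alignment_append, of \<pi>1 x1 y1 \<pi>2 x2 y2 S]
    by (simp add: align_score_append)
qed

lemma align_score_update_fst:
  assumes p: "\<pi> \<in> alignments x y" and i: "i < length x"
  shows "align_score S (x[i := c]) y \<pi> - align_score S x y \<pi> =
      (\<Sum>(i', j) \<in> set \<pi>. if i' = i then S (Some c) (Some (y ! j)) - S (Some (x ! i)) (Some (y ! j)) else 0)
    + (if i \<in> fst ` set \<pi> then 0 else S (Some c) None - S (Some (x ! i)) None)"
proof -
  have p': "\<pi> \<in> alignments (x[i := c]) y"
    using p alignments_cong_length[of "x[i := c]" x y y] by simp
  have pairs: "(\<Sum>(i', j) \<in> set \<pi>. S (Some (x[i := c] ! i')) (Some (y ! j)))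
      - (\<Sum>(i', j) \<in> set \<pi>. S (Some (x ! i')) (Some (y ! j)))
      = (\<Sum>(i', j) \<in> set \<pi>. if i' = i then S (Some c) (Some (y ! j)) - S (Some (x ! i)) (Some (y ! j)) else 0)"
    unfolding sum_subtractf[symmetric] using i by (intro sum.cong) (auto simp: nth_list_update)
  have "(\<Sum>i' \<in> {..<length x} - fst ` set \<pi>. S (Some (x[i := c] ! i')) None)
      - (\<Sum>i' \<in> {..<length x} - fst ` set \<pi>. S (Some (x ! i')) None)
      = (\<Sum>i' \<in> {..<length x} - fst ` set \<pi>. if i' = i then S (Some c) None - S (Some (x ! i)) None else 0)"
    unfolding sum_subtractf[symmetric] using i by (intro sum.cong) (auto simp: nth_list_update)
  also have "\<dots> = (if i \<in> fst ` set \<pi> then 0 else S (Some c) None - S (Some (x ! i)) None)"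
    using i by (simp add: sum.delta)
  finally show ?thesis
    using pairs by (simp add: align_score_as_set_sum[OF p] align_score_as_set_sum[OF p'])
qed

lemma abs_sum_if_fst_eq_le:
  assumes "distinct (map fst \<pi>)" and d: "\<And>q. \<bar>d q\<bar> \<le> B"
  shows "\<bar>\<Sum>q \<in> set \<pi>. if fst q = i then d q else (0::real)\<bar> \<le> B"
proof (cases "\<exists>q \<in> set \<pi>. fst q = i")
  case True
  then obtain q where q: "q \<in> set \<pi>" "fst q = i" by blast
  have "(\<Sum>q' \<in> set \<pi>. if fst q' = i then d q' else 0) = (\<Sum>q' \<in> set \<pi>. if q' = q then d q' else 0)"
    using assms(1) q by (intro sum.cong) (auto simp: distinct_map inj_on_def)
  then show ?thesis using q d by simp
next
  case False
  then show ?thesis using d[of undefined] by (simp add: sum.neutral)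
qed

lemma L_S_update_fst_le:
  assumes i: "i < length x" and M: "\<And>u v. \<bar>S u v\<bar> \<le> M"
  shows "L_S S (x[i := c]) y \<le> L_S S x y + 4 * M"
proof -
  obtain \<pi> where p': "\<pi> \<in> alignments (x[i := c]) y" and L: "L_S S (x[i := c]) y = align_score S (x[i := c]) y \<pi>"
    using L_S_attained by blast
  have p: "\<pi> \<in> alignments x y" using p' alignments_cong_length[of x "x[i := c]" y y] by simp
  have diff2: "\<bar>S u v - S u' v'\<bar> \<le> 2 * M" for u v u' v'
    using M[of u v] M[of u' v'] by linarith
  have "\<bar>\<Sum>(i', j) \<in> set \<pi>. if i' = i then S (Some c) (Some (y ! j)) - S (Some (x ! i)) (Some (y ! j)) else 0\<bar> \<le> 2 * M"
    using abs_sum_if_fst_eq_le[OF alignment_distinct_fst[OF p] diff2] by (simp add: case_prod_unfold)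
  moreover have "\<bar>if i \<in> fst ` set \<pi> then 0 else S (Some c) None - S (Some (x ! i)) None\<bar> \<le> 2 * M"
    using diff2 M[of None None] by auto
  ultimately show ?thesis
    using align_score_update_fst[OF p i, of S c] align_score_le_L_S[OF p, of S] L by linarith
qed

lemma abs_L_S_update_fst_le:
  assumes "i < length x" and "\<And>u v. \<bar>S u v\<bar> \<le> M"
  shows "\<bar>L_S S (x[i := c]) y - L_S S x y\<bar> \<le> 4 * M"
proof -
  have "L_S S ((x[i := c])[i := x ! i]) y \<le> L_S S (x[i := c]) y + 4 * M"
    by (rule L_S_update_fst_le) (use assms in auto)
  moreover have "L_S S (x[i := c]) y \<le> L_S S x y + 4 * M"
    by (rule L_S_update_fst_le) (use assms in auto)
  ultimately show ?thesis
    using assms(1) by simp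
qed

lemma abs_L_S_update_snd_le:
  assumes "j < length y" and M: "\<And>u v. \<bar>S u v\<bar> \<le> M"
  shows "\<bar>L_S S x (y[j := c]) - L_S S x y\<bar> \<le> 4 * M"
  using abs_L_S_update_fst_le[where S = "\<lambda>u v. S v u" and M = M and c = c and y = x, OF assms(1)] M
  by (simp add: L_S_transpose[of S x])

definition flip_gain :: "('a option \<Rightarrow> 'a option \<Rightarrow> real) \<Rightarrow> 'a \<Rightarrow> 'a \<Rightarrow> 'a option \<Rightarrow> 'a option \<Rightarrow> real"
  where "flip_gain S a b u v = (if u = Some a then S (Some b) v - S (Some a) v else 0)"

lemma sum_lessThan_sum_if_eq:
  fixes h :: "'b \<Rightarrow> nat" and f :: "'b \<Rightarrow> real"
  assumes "finite P" and "\<And>q. q \<in> P \<Longrightarrow> h q < n"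
  shows "(\<Sum>i<n. \<Sum>q\<in>P. if h q = i \<and> Q i then f q else 0) = (\<Sum>q\<in>P. if Q (h q) then f q else 0)"
proof -
  have "(\<Sum>i<n. if h q = i \<and> Q i then f q else 0) = (if Q (h q) then f q else 0)" if "q \<in> P" for q
  proof -
    have "(\<Sum>i<n. if h q = i \<and> Q i then f q else 0) = (\<Sum>i<n. if h q = i then (if Q (h q) then f q else 0) else 0)"
      by (intro sum.cong) auto
    then show ?thesis using assms(2)[OF that] by (simp add: sum.delta')
  qed
  then show ?thesis by (subst sum.swap) (auto intro: sum.cong)
qed

lemma sum_flips_align_score_fst:
  assumes p: "\<pi> \<in> alignments x y"
  shows "(\<Sum>i<length x. if x ! i = a then align_score S (x[i := b]) y \<pi> - align_score S x y \<pi> else 0)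
       = align_score (flip_gain S a b) x y \<pi>"
proof -
  let ?G = "{..<length x} - fst ` set \<pi>"
  let ?pair = "\<lambda>q. S (Some b) (Some (y ! snd q)) - S (Some a) (Some (y ! snd q))"
  let ?gap = "S (Some b) None - S (Some a) None"
  have "(\<Sum>i<length x. if x ! i = a then align_score S (x[i := b]) y \<pi> - align_score S x y \<pi> else 0)
      = (\<Sum>i<length x. \<Sum>q\<in>set \<pi>. if fst q = i \<and> x ! i = a then ?pair q else 0)
      + (\<Sum>i<length x. if i \<in> ?G then (if x ! i = a then ?gap else 0) else 0)"
    unfolding sum.distrib[symmetric]
    by (intro sum.cong refl) (auto simp: align_score_update_fst[OF p] case_prod_unfold intro!: sum.cong)
  also have "(\<Sum>i<length x. \<Sum>q\<in>set \<pi>. if fst q = i \<and> x ! i = a then ?pair q else 0)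
      = (\<Sum>q\<in>set \<pi>. if x ! fst q = a then ?pair q else 0)"
    using alignment_in_range[OF p] by (intro sum_lessThan_sum_if_eq) auto
  also have "(\<Sum>i<length x. if i \<in> ?G then (if x ! i = a then ?gap else 0) else 0)
      = (\<Sum>i\<in>{..<length x} \<inter> ?G. if x ! i = a then ?gap else 0)"
    by (rule sum.inter_restrict[symmetric]) simp
  also have "{..<length x} \<inter> ?G = ?G" by auto
  finally show ?thesis
    by (simp add: align_score_as_set_sum[OF p] flip_gain_def case_prod_unfold cong: if_cong)
qed

lemma sum_flips_align_score_snd:
  assumes p: "\<pi> \<in> alignments x y"
  shows "(\<Sum>j<length y. if y ! j = a then align_score S x (y[j := b]) \<pi> - align_score S x y \<pi> else 0)
       = align_score (\<lambda>u v. flip_gain (\<lambda>u v. S v u) a b v u) x y \<pi>"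
proof -
  let ?\<sigma> = "map prod.swap \<pi>"
  have "(\<Sum>j<length y. if y ! j = a then align_score S x (y[j := b]) \<pi> - align_score S x y \<pi> else 0)
      = (\<Sum>j<length y. if y ! j = a
           then align_score (\<lambda>u v. S v u) (y[j := b]) x ?\<sigma> - align_score (\<lambda>u v. S v u) y x ?\<sigma> else 0)"
    unfolding align_score_transpose[of S x] ..
  also have "\<dots> = align_score (flip_gain (\<lambda>u v. S v u) a b) y x ?\<sigma>"
    by (rule sum_flips_align_score_fst[OF alignment_transpose[OF p]])
  also have "\<dots> = align_score (\<lambda>u v. flip_gain (\<lambda>u v. S v u) a b v u) x y \<pi>"
    by (simp add: align_score_transpose[of "flip_gain (\<lambda>u v. S v u) a b" y x] comp_def)
  finally show ?thesis .
qed

lemma T_fun_eq_flip_gains: "T_fun S a b u v = flip_gain S a b u v + flip_gain S a b v u"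
  by (simp add: T_fun_def flip_gain_def)

lemma align_score_T_fun:
  assumes p: "\<pi> \<in> alignments x y" and sym: "\<And>u v. S u v = S v u"
  shows "align_score (T_fun S a b) x y \<pi>
       = (\<Sum>i<length x. if x ! i = a then align_score S (x[i := b]) y \<pi> - align_score S x y \<pi> else 0)
       + (\<Sum>j<length y. if y ! j = a then align_score S x (y[j := b]) \<pi> - align_score S x y \<pi> else 0)"
proof -
  have "(\<lambda>u v. S v u) = S" by (intro ext) (rule sym)
  then have "(\<Sum>j<length y. if y ! j = a then align_score S x (y[j := b]) \<pi> - align_score S x y \<pi> else 0)
      = align_score (\<lambda>u v. flip_gain S a b v u) x y \<pi>"
    using sum_flips_align_score_snd[OF p, of a S b] by simp
  moreover have "T_fun S a b = (\<lambda>u v. flip_gain S a b u v + flip_gain S a b v u)"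
    by (intro ext) (rule T_fun_eq_flip_gains)
  ultimately show ?thesis
    by (simp add: align_score_add sum_flips_align_score_fst[OF p])
qed

section \<open>Expectations over finitely supported distributions\<close>

abbreviation E :: "'b pmf \<Rightarrow> ('b \<Rightarrow> real) \<Rightarrow> real" where
  "E M f \<equiv> measure_pmf.expectation M f"

declare integrable_measure_pmf_finite [simp]

lemma finite_set_pmf_replicate_pmf [simp]:
  assumes "finite (set_pmf p)"
  shows "finite (set_pmf (replicate_pmf n p))"
proof (rule finite_subset)
  show "set_pmf (replicate_pmf n p) \<subseteq> {xs. set xs \<subseteq> set_pmf p \<and> length xs = n}"
    by (auto simp: set_replicate_pmf)
qed (rule finite_lists_length_eq[OF assms])

lemma length_in_set_replicate_pmf: "xs \<in> set_pmf (replicate_pmf n p) \<Longrightarrow> length xs = n"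
  by (simp add: set_replicate_pmf)

lemma expectation_pmf_as_sum:
  "finite (set_pmf M) \<Longrightarrow> E M f = (\<Sum>x\<in>set_pmf M. pmf M x * f x)"
  by (subst integral_measure_pmf_real[of "set_pmf M"]) (auto simp: mult.commute)

lemma expectation_cong_pmf: "(\<And>x. x \<in> set_pmf M \<Longrightarrow> f x = g x) \<Longrightarrow> E M f = E M g"
  by (rule integral_cong_AE) (auto simp: AE_measure_pmf_iff)

lemma expectation_mono_pmf:
  "finite (set_pmf M) \<Longrightarrow> (\<And>x. x \<in> set_pmf M \<Longrightarrow> f x \<le> g x) \<Longrightarrow> E M f \<le> E M g"
  by (rule integral_mono_AE) (auto simp: AE_measure_pmf_iff)

lemma abs_expectation_le_pmf:
  assumes "finite (set_pmf M)" and "\<And>x. x \<in> set_pmf M \<Longrightarrow> \<bar>f x\<bar> \<le> K"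
  shows "\<bar>E M f\<bar> \<le> K"
proof -
  have "\<bar>E M f\<bar> \<le> E M (\<lambda>x. \<bar>f x\<bar>)" by (rule integral_abs_bound)
  also have "\<dots> \<le> E M (\<lambda>_. K)" by (rule expectation_mono_pmf) (use assms in auto)
  finally show ?thesis by simp
qed

lemma expectation_commute_pmf:
  assumes "finite (set_pmf A)" and "finite (set_pmf B)"
  shows "E A (\<lambda>a. E B (h a)) = E B (\<lambda>b. E A (\<lambda>a. h a b))"
  using assms
  by (simp add: expectation_pmf_as_sum sum_distrib_left sum.swap[of _ "set_pmf A"] algebra_simps)

lemma expectation_bind_pmf:
  assumes "finite (set_pmf M)" and "\<And>x. x \<in> set_pmf M \<Longrightarrow> finite (set_pmf (N x))"
  shows "E (bind_pmf M N) f = E M (\<lambda>x. E (N x) f)"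
  using pmf_expectation_bind[of "set_pmf M" N M f] assms by (simp add: expectation_pmf_as_sum)

lemma expectation_pair_pmf:
  "finite (set_pmf A) \<Longrightarrow> finite (set_pmf B) \<Longrightarrow> E (pair_pmf A B) h = E A (\<lambda>a. E B (\<lambda>b. h (a, b)))"
  unfolding pair_pmf_def by (simp add: expectation_bind_pmf)

lemma expectation_replicate_pmf_Suc:
  "finite (set_pmf p) \<Longrightarrow>
    E (replicate_pmf (Suc n) p) h = E p (\<lambda>x. E (replicate_pmf n p) (\<lambda>xs. h (x # xs)))"
  by (simp add: expectation_bind_pmf)

lemma expectation_replicate_pmf_add:
  "finite (set_pmf p) \<Longrightarrow>
    E (replicate_pmf (m + n) p) h = E (replicate_pmf m p) (\<lambda>xs. E (replicate_pmf n p) (\<lambda>ys. h (xs @ ys)))"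
  by (simp add: replicate_pmf_distrib expectation_bind_pmf)

lemma expectation_square_diff_const:
  assumes "finite (set_pmf M)"
  shows "E M (\<lambda>x. (f x - c)\<^sup>2) = E M (\<lambda>x. (f x - E M f)\<^sup>2) + (E M f - c)\<^sup>2"
proof -
  define m where "m = E M f"
  have "E M (\<lambda>x. (f x - c)\<^sup>2) = E M (\<lambda>x. (f x - m)\<^sup>2 + 2 * (m - c) * f x - 2 * (m - c) * m + (m - c)\<^sup>2)"
    by (rule expectation_cong_pmf) (simp add: power2_eq_square algebra_simps)
  also have "\<dots> = E M (\<lambda>x. (f x - m)\<^sup>2) + (m - c)\<^sup>2"
    using assms by (simp add: m_def)
  finally show ?thesis by (simp add: m_def)
qed

lemma expectation_square_dev_le:
  assumes "finite (set_pmf M)"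
    and K: "\<And>x x'. x \<in> set_pmf M \<Longrightarrow> x' \<in> set_pmf M \<Longrightarrow> \<bar>f x - f x'\<bar> \<le> K"
  shows "E M (\<lambda>x. (f x - E M f)\<^sup>2) \<le> K\<^sup>2"
proof -
  obtain x0 where x0: "x0 \<in> set_pmf M" using set_pmf_not_empty[of M] by blast
  have "E M (\<lambda>x. (f x - E M f)\<^sup>2) \<le> E M (\<lambda>x. (f x - f x0)\<^sup>2)"
    using expectation_square_diff_const[OF assms(1), of f "f x0"] by simp
  also have "\<dots> \<le> E M (\<lambda>_. K\<^sup>2)"
  proof (rule expectation_mono_pmf[OF assms(1)])
    fix x assume "x \<in> set_pmf M"
    then have "\<bar>f x - f x0\<bar> \<le> K" using K x0 by blast
    then show "(f x - f x0)\<^sup>2 \<le> K\<^sup>2"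
      by (metis abs_ge_zero order_trans power2_abs power_mono)
  qed
  finally show ?thesis by simp
qed

text \<open>Efron--Stein, by conditioning on the first letter.\<close>

lemma variance_replicate_pmf_le:
  assumes p: "finite (set_pmf p)"
    and K: "\<And>z i c. length z = n \<Longrightarrow> i < n \<Longrightarrow> \<bar>f (z[i := c]) - f z\<bar> \<le> K"
  shows "E (replicate_pmf n p) (\<lambda>z. (f z - E (replicate_pmf n p) f)\<^sup>2) \<le> real n * K\<^sup>2"
  using K
proof (induction n arbitrary: f)
  case (Suc n)
  let ?R = "replicate_pmf n p"
  define g where "g xs = E p (\<lambda>x. f (x # xs))" for xs
  define \<mu> where "\<mu> = E (replicate_pmf (Suc n) p) f"
  have \<mu>: "\<mu> = E ?R g"
    unfolding \<mu>_def g_def expectation_replicate_pmf_Suc[OF p]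
    by (rule expectation_commute_pmf) (simp_all add: p)
  have "E (replicate_pmf (Suc n) p) (\<lambda>z. (f z - \<mu>)\<^sup>2) = E ?R (\<lambda>xs. E p (\<lambda>x. (f (x # xs) - \<mu>)\<^sup>2))"
    unfolding expectation_replicate_pmf_Suc[OF p] by (rule expectation_commute_pmf) (simp_all add: p)
  also have "\<dots> \<le> E ?R (\<lambda>xs. K\<^sup>2 + (g xs - \<mu>)\<^sup>2)"
  proof (rule expectation_mono_pmf)
    fix xs assume xs: "xs \<in> set_pmf ?R"
    have "E p (\<lambda>x. (f (x # xs) - g xs)\<^sup>2) \<le> K\<^sup>2"
      unfolding g_def
    proof (rule expectation_square_dev_le[OF p])
      fix x x' :: 'a
      have "\<bar>f ((x' # xs)[0 := x]) - f (x' # xs)\<bar> \<le> K"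
        by (rule Suc.prems) (use length_in_set_replicate_pmf[OF xs] in auto)
      then show "\<bar>f (x # xs) - f (x' # xs)\<bar> \<le> K" by simp
    qed
    then show "E p (\<lambda>x. (f (x # xs) - \<mu>)\<^sup>2) \<le> K\<^sup>2 + (g xs - \<mu>)\<^sup>2"
      using expectation_square_diff_const[OF p, of "\<lambda>x. f (x # xs)" \<mu>] by (simp add: g_def)
  qed (simp add: p)
  also have "\<dots> = K\<^sup>2 + E ?R (\<lambda>xs. (g xs - \<mu>)\<^sup>2)"
    by (simp add: p)
  also have "E ?R (\<lambda>xs. (g xs - \<mu>)\<^sup>2) \<le> real n * K\<^sup>2"
    unfolding \<mu>
  proof (rule Suc.IH)
    fix z :: "'a list" and i c assume z: "length z = n" and i: "i < n"
    have "g (z[i := c]) - g z = E p (\<lambda>x. f ((x # z)[Suc i := c]) - f (x # z))"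
      by (simp add: g_def p)
    also have "\<bar>\<dots>\<bar> \<le> K"
      by (rule abs_expectation_le_pmf[OF p], rule Suc.prems) (use z i in auto)
    finally show "\<bar>g (z[i := c]) - g z\<bar> \<le> K" .
  qed
  finally show ?case unfolding \<mu>_def by (simp add: algebra_simps)
qed simp

lemma expectation_resample_replicate_pmf:
  assumes p: "finite (set_pmf p)" and "i < n"
  shows "E (replicate_pmf n p) (\<lambda>z. E p (\<lambda>c. h (z[i := c]))) = E (replicate_pmf n p) h"
  using assms(2)
proof (induction n arbitrary: i h)
  case (Suc n)
  show ?case
  proof (cases i)
    case 0
    have "E (replicate_pmf (Suc n) p) (\<lambda>z. E p (\<lambda>c. h (z[i := c])))
        = E (replicate_pmf n p) (\<lambda>xs. E p (\<lambda>c. h (c # xs)))"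
      unfolding expectation_replicate_pmf_Suc[OF p] 0 by simp
    also have "\<dots> = E p (\<lambda>c. E (replicate_pmf n p) (\<lambda>xs. h (c # xs)))"
      by (rule expectation_commute_pmf) (simp_all add: p)
    finally show ?thesis unfolding expectation_replicate_pmf_Suc[OF p] .
  next
    case (Suc j)
    then have "j < n" using Suc.prems by simp
    have "E (replicate_pmf n p) (\<lambda>xs. E p (\<lambda>c. h (x # xs[j := c]))) = E (replicate_pmf n p) (\<lambda>xs. h (x # xs))"
      for x using Suc.IH[OF \<open>j < n\<close>, of "\<lambda>xs. h (x # xs)"] by simp
    then show ?thesis
      unfolding expectation_replicate_pmf_Suc[OF p] Suc by simp
  qed
qed simp

section \<open>Mean and variance of the optimal score\<close>

definition L_halves :: "('a option \<Rightarrow> 'a option \<Rightarrow> real) \<Rightarrow> nat \<Rightarrow> 'a list \<Rightarrow> real" where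
  "L_halves S n z = L_S S (take n z) (drop n z)"

lemma abs_L_halves_update_le:
  assumes "length z = n + n" and "i < n + n" and "\<And>u v. \<bar>S u v\<bar> \<le> M"
  shows "\<bar>L_halves S n (z[i := c]) - L_halves S n z\<bar> \<le> 4 * M"
proof (cases "i < n")
  case True
  then show ?thesis
    using abs_L_S_update_fst_le[of i "take n z" S M c "drop n z"] assms
    by (simp add: L_halves_def take_update_swap)
next
  case False
  then show ?thesis
    using abs_L_S_update_snd_le[of "i - n" "drop n z" S M "take n z" c] assms
    by (simp add: L_halves_def drop_update_swap)
qed

lemma expectation_XY_pmf:
  assumes p: "finite (set_pmf p)"
  shows "E (XY_pmf p n) h = E (replicate_pmf (n + n) p) (\<lambda>z. h (take n z, drop n z))"
proof -
  have "E (XY_pmf p n) h = E (replicate_pmf n p) (\<lambda>x. E (replicate_pmf n p) (\<lambda>y. h (x, y)))"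
    unfolding XY_pmf_def by (rule expectation_pair_pmf) (simp_all add: p)
  also have "\<dots> = E (replicate_pmf n p) (\<lambda>x. E (replicate_pmf n p) (\<lambda>y. h (take n (x @ y), drop n (x @ y))))"
    by (intro expectation_cong_pmf) (simp add: length_in_set_replicate_pmf)
  finally show ?thesis by (simp add: expectation_replicate_pmf_add[OF p])
qed

lemma Ln_mean_eq: "finite (set_pmf p) \<Longrightarrow> Ln_mean p S n = E (replicate_pmf (n + n) p) (L_halves S n)"
  unfolding Ln_mean_def by (simp add: expectation_XY_pmf L_halves_def[abs_def])

lemma Ln_var_eq:
  "finite (set_pmf p) \<Longrightarrow> Ln_var p S n =
     E (replicate_pmf (n + n) p) (\<lambda>z. (L_halves S n z - E (replicate_pmf (n + n) p) (L_halves S n))\<^sup>2)"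
  unfolding Ln_var_def by (simp add: expectation_XY_pmf L_halves_def[abs_def])

lemma Ln_var_le:
  assumes "finite (set_pmf p)" and "\<And>u v. \<bar>S u v\<bar> \<le> M"
  shows "Ln_var p S n \<le> real n * (32 * M\<^sup>2)"
proof -
  have "Ln_var p S n \<le> real (n + n) * (4 * M)\<^sup>2"
    unfolding Ln_var_eq[OF assms(1)]
    by (rule variance_replicate_pmf_le[OF assms(1)]) (rule abs_L_halves_update_le; use assms in auto)
  then show ?thesis by (simp add: power2_eq_square algebra_simps)
qed

lemma Ln_mean_superadditive:
  assumes p: "finite (set_pmf p)"
  shows "Ln_mean p S m + Ln_mean p S n \<le> Ln_mean p S (m + n)"
proof -
  let ?R = "\<lambda>k. replicate_pmf k p"
  have Ln_mean_pair: "Ln_mean p S k = E (?R k) (\<lambda>x. E (?R k) (L_S S x))" for k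
    unfolding Ln_mean_def XY_pmf_def by (simp add: expectation_pair_pmf p)
  have "Ln_mean p S m + Ln_mean p S n
      = E (?R m) (\<lambda>x1. E (?R n) (\<lambda>x2. E (?R m) (\<lambda>y1. E (?R n) (\<lambda>y2. L_S S x1 y1 + L_S S x2 y2))))"
    by (simp add: Ln_mean_pair p)
  also have "\<dots> \<le> E (?R m) (\<lambda>x1. E (?R n) (\<lambda>x2. E (?R m) (\<lambda>y1. E (?R n) (\<lambda>y2. L_S S (x1 @ x2) (y1 @ y2)))))"
    by (intro expectation_mono_pmf L_S_append_superadditive) (simp_all add: p)
  also have "\<dots> = Ln_mean p S (m + n)"
    unfolding Ln_mean_pair expectation_replicate_pmf_add[OF p] ..
  finally show ?thesis .
qed

lemma abs_Ln_mean_le: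
  assumes p: "finite (set_pmf p)" and M: "\<And>u v. \<bar>S u v\<bar> \<le> M"
  shows "\<bar>Ln_mean p S n\<bar> \<le> 3 * M * real n"
  unfolding Ln_mean_eq[OF p]
proof (rule abs_expectation_le_pmf)
  fix z assume "z \<in> set_pmf (replicate_pmf (n + n) p)"
  then have "length z = n + n" by (rule length_in_set_replicate_pmf)
  moreover have "\<bar>L_S S (take n z) (drop n z)\<bar> \<le> M * (2 * length (take n z) + length (drop n z))"
    by (rule abs_L_S_le) (rule M)
  ultimately show "\<bar>L_halves S n z\<bar> \<le> 3 * M * real n"
    by (simp add: L_halves_def algebra_simps)
qed (simp add: p)

lemma lambda_n_tendsto_lambda:
  assumes "finite (set_pmf p)" and "\<And>u v. \<bar>S u v\<bar> \<le> M"
  shows "lambda_n p S \<longlonglongrightarrow> lambda p S"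
proof -
  have "convergent (\<lambda>n. Ln_mean p S n / real n)"
  proof (rule superadditive_convergent)
    show "\<bar>Ln_mean p S n\<bar> \<le> 3 * M * real n" for n
      by (rule abs_Ln_mean_le) (use assms in auto)
  qed (rule Ln_mean_superadditive[OF assms(1)])
  then show ?thesis
    unfolding lambda_def lambda_n_def[abs_def] by (simp add: convergent_LIMSEQ_iff)
qed

section \<open>Lower bound on the variance\<close>

lemma sum_lessThan_add:
  fixes f :: "nat \<Rightarrow> 'b::comm_monoid_add"
  shows "(\<Sum>i<m + k. f i) = (\<Sum>i<m. f i) + (\<Sum>j<k. f (m + j))"
  by (induction k) (simp_all add: ac_simps)

lemma align_score_T_fun_le_flips_L_S:
  assumes p: "\<pi> \<in> alignments x y" and L: "L_S S x y = align_score S x y \<pi>"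
    and sym: "\<And>u v. S u v = S v u"
  shows "align_score (T_fun S a b) x y \<pi>
       \<le> (\<Sum>i<length x. if x ! i = a then L_S S (x[i := b]) y - L_S S x y else 0)
       + (\<Sum>j<length y. if y ! j = a then L_S S x (y[j := b]) - L_S S x y else 0)"
proof -
  have "align_score S (x[i := b]) y \<pi> \<le> L_S S (x[i := b]) y" for i
    using p alignments_cong_length[of "x[i := b]" x y y] by (simp add: align_score_le_L_S)
  moreover have "align_score S x (y[j := b]) \<pi> \<le> L_S S x (y[j := b])" for j
    using p alignments_cong_length[of x x "y[j := b]" y] by (simp add: align_score_le_L_S)
  ultimately show ?thesis
    unfolding align_score_T_fun[OF p sym] L
    by (intro add_mono sum_mono) auto
qed

lemma sum_flips_L_halves_ge:
  fixes S :: "'a option \<Rightarrow> 'a option \<Rightarrow> real"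
  assumes sym: "\<And>u v. S u v = S v u" and "\<epsilon> > 0" and z: "length z = n + n"
  shows "(L_halves S n z - L_halves (\<lambda>u v. S u v - \<epsilon> * T_fun S a b u v) n z) / \<epsilon>
       \<le> (\<Sum>i<n + n. if z ! i = a then L_halves S n (z[i := b]) - L_halves S n z else 0)"
proof -
  define x where "x = take n z"
  define y where "y = drop n z"
  obtain \<pi> where p: "\<pi> \<in> alignments x y" and L: "L_S S x y = align_score S x y \<pi>"
    using L_S_attained by blast
  have "(\<Sum>i<n + n. if z ! i = a then L_halves S n (z[i := b]) - L_halves S n z else 0)
      = (\<Sum>i<length x. if x ! i = a then L_S S (x[i := b]) y - L_S S x y else 0)
      + (\<Sum>j<length y. if y ! j = a then L_S S x (y[j := b]) - L_S S x y else 0)"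
    unfolding sum_lessThan_add using z
    by (intro arg_cong2[where f = "(+)"] sum.cong)
       (simp_all add: x_def y_def L_halves_def take_update_swap drop_update_swap list_update_beyond)
  then have T_le: "align_score (T_fun S a b) x y \<pi>
      \<le> (\<Sum>i<n + n. if z ! i = a then L_halves S n (z[i := b]) - L_halves S n z else 0)"
    using align_score_T_fun_le_flips_L_S[OF p L sym] by simp
  have "L_S S x y - \<epsilon> * align_score (T_fun S a b) x y \<pi>
      \<le> L_halves (\<lambda>u v. S u v - \<epsilon> * T_fun S a b u v) n z"
    using align_score_le_L_S[OF p, of "\<lambda>u v. S u v - \<epsilon> * T_fun S a b u v"]
    unfolding align_score_diff_scaled L by (simp add: L_halves_def x_def y_def)
  moreover have "\<epsilon> * align_score (T_fun S a b) x y \<pi>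
      \<le> \<epsilon> * (\<Sum>i<n + n. if z ! i = a then L_halves S n (z[i := b]) - L_halves S n z else 0)"
    using mult_left_mono[OF T_le] \<open>\<epsilon> > 0\<close> by simp
  moreover have "L_halves S n z = L_S S x y" by (simp add: L_halves_def x_def y_def)
  ultimately have "L_halves S n z - L_halves (\<lambda>u v. S u v - \<epsilon> * T_fun S a b u v) n z
      \<le> \<epsilon> * (\<Sum>i<n + n. if z ! i = a then L_halves S n (z[i := b]) - L_halves S n z else 0)"
    by linarith
  then show ?thesis
    using \<open>\<epsilon> > 0\<close> by (simp add: pos_divide_le_eq mult.commute)
qed

definition flip_weight :: "'a pmf \<Rightarrow> 'a \<Rightarrow> 'a \<Rightarrow> 'a \<Rightarrow> real" where
  "flip_weight p a b c = (if c = a then 1 else if c = b then - (pmf p a / pmf p b) else 0)"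

lemma expectation_mult_flip_weight:
  assumes "a \<noteq> b" and "pmf p b > 0"
  shows "E p (\<lambda>c. h c * flip_weight p a b c) = pmf p a * (h a - h b)"
proof -
  have "E p (\<lambda>c. h c * flip_weight p a b c) = (\<Sum>c\<in>{a, b}. h c * flip_weight p a b c * pmf p c)"
    by (rule integral_measure_pmf_real) (auto simp: flip_weight_def split: if_splits)
  then show ?thesis
    using assms by (simp add: flip_weight_def field_simps)
qed

lemma expectation_if_eq:
  "E p (\<lambda>c. if c = a then v c else 0) = pmf p a * v a"
proof -
  have "E p (\<lambda>c. if c = a then v c else 0) = (\<Sum>c\<in>{a}. (if c = a then v c else 0) * pmf p c)"
    by (rule integral_measure_pmf_real) (auto split: if_splits)
  then show ?thesis by simp
qed

text \<open>Resampling letter i turns both sides into p_a times the same difference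
  F (z[i := a]) - F (z[i := b]).\<close>

lemma expectation_mult_flip_weight_replicate_pmf:
  assumes p: "finite (set_pmf p)" and "a \<noteq> b" "pmf p b > 0" and i: "i < N"
  shows "E (replicate_pmf N p) (\<lambda>z. F z * flip_weight p a b (z ! i))
       = - E (replicate_pmf N p) (\<lambda>z. if z ! i = a then F (z[i := b]) - F z else 0)"
proof -
  let ?R = "replicate_pmf N p"
  let ?D = "\<lambda>z. pmf p a * (F (z[i := a]) - F (z[i := b]))"
  have resample: "E ?R g = E ?R (\<lambda>z. E p (\<lambda>c. g (z[i := c])))" for g
    using expectation_resample_replicate_pmf[OF p i] by simp
  have "E ?R (\<lambda>z. F z * flip_weight p a b (z ! i)) = E ?R ?D"
  proof (subst resample, rule expectation_cong_pmf)
    fix z assume "z \<in> set_pmf ?R"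
    then have "i < length z" using i length_in_set_replicate_pmf by blast
    then show "E p (\<lambda>c. F (z[i := c]) * flip_weight p a b (z[i := c] ! i)) = ?D z"
      using expectation_mult_flip_weight[OF assms(2,3), of "\<lambda>c. F (z[i := c])"] by simp
  qed
  moreover have "E ?R (\<lambda>z. if z ! i = a then F (z[i := b]) - F z else 0) = E ?R (\<lambda>z. - ?D z)"
  proof (subst resample, rule expectation_cong_pmf)
    fix z assume "z \<in> set_pmf ?R"
    then have "i < length z" using i length_in_set_replicate_pmf by blast
    then have "E p (\<lambda>c. if z[i := c] ! i = a then F ((z[i := c])[i := b]) - F (z[i := c]) else 0)
        = E p (\<lambda>c. if c = a then F (z[i := b]) - F (z[i := c]) else 0)"
      by (simp cong: if_cong)
    then show "E p (\<lambda>c. if z[i := c] ! i = a then F ((z[i := c])[i := b]) - F (z[i := c]) else 0) = - ?D z"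
      by (simp add: expectation_if_eq algebra_simps)
  qed
  ultimately show ?thesis by (simp add: p)
qed

lemma expectation_flip_weight_replicate_pmf:
  assumes "finite (set_pmf p)" and "a \<noteq> b" "pmf p b > 0" and "i < N"
  shows "E (replicate_pmf N p) (\<lambda>z. flip_weight p a b (z ! i)) = 0"
proof -
  have "(\<lambda>z. if z ! i = a then (1::real) - 1 else 0) = (\<lambda>_. 0)" by (simp cong: if_cong)
  then show ?thesis
    using expectation_mult_flip_weight_replicate_pmf[OF assms, of "\<lambda>_. 1"] by simp
qed

lemma covariance_flip_weights:
  assumes p: "finite (set_pmf p)" and "a \<noteq> b" "pmf p b > 0"
  shows "E (replicate_pmf N p) (\<lambda>z. (F z - E (replicate_pmf N p) F) * (\<Sum>i<N. flip_weight p a b (z ! i)))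
       = - E (replicate_pmf N p) (\<lambda>z. \<Sum>i<N. if z ! i = a then F (z[i := b]) - F z else 0)"
  using expectation_mult_flip_weight_replicate_pmf[OF assms]
    expectation_flip_weight_replicate_pmf[OF assms]
  by (simp add: p left_diff_distrib sum_distrib_left sum_subtractf sum_negf)

lemma expectation_square_flip_weights_le:
  assumes p: "finite (set_pmf p)" and "a \<noteq> b" "pmf p b > 0"
  shows "E (replicate_pmf N p) (\<lambda>z. (\<Sum>i<N. flip_weight p a b (z ! i))\<^sup>2) \<le> real N * (1 + pmf p a / pmf p b)\<^sup>2"
proof -
  have "E (replicate_pmf N p) (\<lambda>z. \<Sum>i<N. flip_weight p a b (z ! i)) = 0"
    using expectation_flip_weight_replicate_pmf[OF assms] by (simp add: p)
  moreover have "E (replicate_pmf N p) (\<lambda>z. ((\<Sum>i<N. flip_weight p a b (z ! i))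
        - E (replicate_pmf N p) (\<lambda>z. \<Sum>i<N. flip_weight p a b (z ! i)))\<^sup>2)
      \<le> real N * (1 + pmf p a / pmf p b)\<^sup>2"
  proof (rule variance_replicate_pmf_le[OF p])
    fix z :: "'a list" and i c assume "length z = N" "i < N"
    then have "(\<Sum>j<N. flip_weight p a b (z[i := c] ! j)) - (\<Sum>j<N. flip_weight p a b (z ! j))
        = (\<Sum>j<N. if j = i then flip_weight p a b c - flip_weight p a b (z ! i) else 0)"
      unfolding sum_subtractf[symmetric] by (intro sum.cong) (auto simp: nth_list_update)
    also have "\<dots> = flip_weight p a b c - flip_weight p a b (z ! i)"
      using \<open>i < N\<close> by simp
    finally have "(\<Sum>j<N. flip_weight p a b (z[i := c] ! j)) - (\<Sum>j<N. flip_weight p a b (z ! j))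
        = flip_weight p a b c - flip_weight p a b (z ! i)" .
    moreover have "\<bar>flip_weight p a b c - flip_weight p a b d\<bar> \<le> 1 + pmf p a / pmf p b" for d
    proof -
      have "\<bar>(if c = a then 1 else if c = b then - q else 0) - (if d = a then 1 else if d = b then - q else 0)\<bar> \<le> 1 + q"
        if "q \<ge> 0" for q :: real
        using that by auto
      then show ?thesis by (simp add: flip_weight_def)
    qed
    ultimately show "\<bar>(\<Sum>j<N. flip_weight p a b (z[i := c] ! j)) - (\<Sum>j<N. flip_weight p a b (z ! j))\<bar>
        \<le> 1 + pmf p a / pmf p b"
      by simp
  qed
  ultimately show ?thesis by simp
qed

lemma expectation_square_ge_covariance:
  assumes "finite (set_pmf M)" and "E M (\<lambda>z. U z * W z) = C"
    and "E M (\<lambda>z. (W z)\<^sup>2) \<le> V" and "V > 0"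
  shows "C\<^sup>2 / V \<le> E M (\<lambda>z. (U z)\<^sup>2)"
proof -
  define t where "t = C / V"
  have "0 \<le> E M (\<lambda>z. (U z - t * W z)\<^sup>2)" by simp
  also have "\<dots> = E M (\<lambda>z. (U z)\<^sup>2 - 2 * t * (U z * W z) + t\<^sup>2 * (W z)\<^sup>2)"
    by (simp add: power2_eq_square algebra_simps)
  also have "\<dots> = E M (\<lambda>z. (U z)\<^sup>2) - 2 * t * C + t\<^sup>2 * E M (\<lambda>z. (W z)\<^sup>2)"
    using assms(1,2) by simp
  also have "\<dots> \<le> E M (\<lambda>z. (U z)\<^sup>2) - 2 * t * C + t\<^sup>2 * V"
    using assms(3) by (simp add: mult_left_mono)
  also have "\<dots> = E M (\<lambda>z. (U z)\<^sup>2) - C\<^sup>2 / V"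
    using assms(4) by (simp add: t_def power2_eq_square field_simps)
  finally show ?thesis by simp
qed

lemma Ln_mean_diff_le_expected_flips:
  fixes S :: "'a option \<Rightarrow> 'a option \<Rightarrow> real"
  assumes p: "finite (set_pmf p)" and sym: "\<And>u v. S u v = S v u" and \<epsilon>: "\<epsilon> > 0"
  shows "(Ln_mean p S n - Ln_mean p (\<lambda>u v. S u v - \<epsilon> * T_fun S a b u v) n) / \<epsilon>
       \<le> E (replicate_pmf (n + n) p)
           (\<lambda>z. \<Sum>i<n + n. if z ! i = a then L_halves S n (z[i := b]) - L_halves S n z else 0)"
proof -
  let ?S' = "\<lambda>u v. S u v - \<epsilon> * T_fun S a b u v"
  have "(Ln_mean p S n - Ln_mean p ?S' n) / \<epsilon>
      = E (replicate_pmf (n + n) p) (\<lambda>z. (L_halves S n z - L_halves ?S' n z) / \<epsilon>)"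
    by (simp add: Ln_mean_eq[OF p] p)
  also have "\<dots> \<le> E (replicate_pmf (n + n) p)
      (\<lambda>z. \<Sum>i<n + n. if z ! i = a then L_halves S n (z[i := b]) - L_halves S n z else 0)"
  proof (rule expectation_mono_pmf)
    fix z assume "z \<in> set_pmf (replicate_pmf (n + n) p)"
    then have "length z = n + n" by (rule length_in_set_replicate_pmf)
    then show "(L_halves S n z - L_halves ?S' n z) / \<epsilon>
        \<le> (\<Sum>i<n + n. if z ! i = a then L_halves S n (z[i := b]) - L_halves S n z else 0)"
      by (rule sum_flips_L_halves_ge[where S = S, OF sym \<epsilon>])
  qed (simp add: p)
  finally show ?thesis .
qed

lemma Ln_var_ge:
  fixes S :: "'a option \<Rightarrow> 'a option \<Rightarrow> real"
  assumes p: "finite (set_pmf p)" and ab: "a \<noteq> b" and pb: "pmf p b > 0"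
    and sym: "\<And>u v. S u v = S v u" and \<epsilon>: "\<epsilon> > 0" and n: "n > 0" and "\<delta> \<ge> 0"
    and gap: "real n * \<delta> \<le> Ln_mean p S n - Ln_mean p (\<lambda>u v. S u v - \<epsilon> * T_fun S a b u v) n"
  shows "real n * (\<delta>\<^sup>2 / (2 * \<epsilon>\<^sup>2 * (1 + pmf p a / pmf p b)\<^sup>2)) \<le> Ln_var p S n"
proof -
  define S' where "S' = (\<lambda>u v. S u v - \<epsilon> * T_fun S a b u v)"
  define R where "R = replicate_pmf (n + n) p"
  define F where "F = L_halves S n"
  define W where "W z = (\<Sum>i<n + n. flip_weight p a b (z ! i))" for z
  define K where "K = 1 + pmf p a / pmf p b"
  define C where "C = E R (\<lambda>z. (F z - E R F) * W z)"
  have finR: "finite (set_pmf R)" by (simp add: R_def p)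
  have "K > 0" using pb by (simp add: K_def add_pos_nonneg)
  have "real n * \<delta> / \<epsilon> \<le> (Ln_mean p S n - Ln_mean p S' n) / \<epsilon>"
    using gap \<epsilon> unfolding S'_def by (simp add: divide_right_mono)
  also have "\<dots> \<le> E R (\<lambda>z. \<Sum>i<n + n. if z ! i = a then F (z[i := b]) - F z else 0)"
    unfolding S'_def R_def F_def by (rule Ln_mean_diff_le_expected_flips[OF p sym \<epsilon>])
  also have "\<dots> = - C"
    unfolding C_def R_def W_def covariance_flip_weights[OF p ab pb] by simp
  finally have "real n * \<delta> / \<epsilon> \<le> - C" .
  moreover have "0 \<le> real n * \<delta> / \<epsilon>" using \<open>\<delta> \<ge> 0\<close> \<epsilon> by simp
  ultimately have "(real n * \<delta> / \<epsilon>)\<^sup>2 \<le> C\<^sup>2"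
    using power_mono[of "real n * \<delta> / \<epsilon>" "- C" 2] by simp
  moreover have V: "0 < real (n + n) * K\<^sup>2" using n \<open>K > 0\<close> by simp
  moreover have "C\<^sup>2 / (real (n + n) * K\<^sup>2) \<le> Ln_var p S n"
  proof -
    have "E R (\<lambda>z. (W z)\<^sup>2) \<le> real (n + n) * K\<^sup>2"
      unfolding R_def W_def K_def by (rule expectation_square_flip_weights_le[OF p ab pb])
    then show ?thesis
      unfolding Ln_var_eq[OF p] R_def[symmetric] F_def[symmetric]
      by (rule expectation_square_ge_covariance[OF finR C_def[symmetric] _ V])
  qed
  ultimately have "(real n * \<delta> / \<epsilon>)\<^sup>2 / (real (n + n) * K\<^sup>2) \<le> Ln_var p S n"
    by (meson divide_right_mono less_imp_le order_trans)
  also have "(real n * \<delta> / \<epsilon>)\<^sup>2 / (real (n + n) * K\<^sup>2) = real n * (\<delta>\<^sup>2 / (2 * \<epsilon>\<^sup>2 * K\<^sup>2))"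
    using n \<epsilon> \<open>K > 0\<close> by (simp add: power2_eq_square field_simps)
  finally show ?thesis by (simp add: K_def)
qed

lemma finite_score_bounded: "\<exists>M. \<forall>u v. \<bar>(S :: 'a::finite option \<Rightarrow> 'a option \<Rightarrow> real) u v\<bar> \<le> M"
proof -
  have "\<bar>S u v\<bar> \<le> Max (range (\<lambda>(u, v). \<bar>S u v\<bar>))" for u v
    by (rule Max_ge) (auto intro!: image_eqI[of _ _ "(u, v)"])
  then show ?thesis by blast
qed

lemma Ln_var_eventually_ge:
  fixes p :: "'a::finite pmf" and S :: "'a option \<Rightarrow> 'a option \<Rightarrow> real"
  assumes ab: "a \<noteq> b" and pb: "pmf p b > 0" and sym: "\<And>u v. S u v = S v u" and \<epsilon>: "\<epsilon> > 0"
    and pos: "lambda p S - lambda p (\<lambda>u v. S u v - \<epsilon> * T_fun S a b u v) > 0"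
  shows "\<exists>c>0. eventually (\<lambda>n. real n * c \<le> Ln_var p S n) sequentially"
proof -
  define S' where "S' = (\<lambda>u v. S u v - \<epsilon> * T_fun S a b u v)"
  define \<delta> where "\<delta> = lambda p S - lambda p S'"
  define c where "c = (\<delta> / 2)\<^sup>2 / (2 * \<epsilon>\<^sup>2 * (1 + pmf p a / pmf p b)\<^sup>2)"
  obtain M where "\<And>u v. \<bar>S u v\<bar> \<le> M" using finite_score_bounded by blast
  moreover obtain M' where "\<And>u v. \<bar>S' u v\<bar> \<le> M'" using finite_score_bounded by blast
  ultimately have "(\<lambda>n. lambda_n p S n - lambda_n p S' n) \<longlonglongrightarrow> \<delta>"
    unfolding \<delta>_def by (intro tendsto_diff lambda_n_tendsto_lambda) auto
  moreover have "\<delta> > 0" using pos by (simp add: \<delta>_def S'_def)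
  ultimately have "eventually (\<lambda>n. \<delta> / 2 < lambda_n p S n - lambda_n p S' n \<and> n > 0) sequentially"
    by (intro eventually_conj order_tendstoD(1) eventually_gt_at_top) auto
  then have "eventually (\<lambda>n. real n * c \<le> Ln_var p S n) sequentially"
  proof (rule eventually_mono)
    fix n assume n: "\<delta> / 2 < lambda_n p S n - lambda_n p S' n \<and> n > 0"
    then have "\<delta> / 2 < (Ln_mean p S n - Ln_mean p S' n) / real n" and "n > 0"
      by (simp_all add: lambda_n_def diff_divide_distrib)
    then have "real n * (\<delta> / 2) \<le> Ln_mean p S n - Ln_mean p S' n"
      by (simp add: pos_less_divide_eq mult.commute)
    then show "real n * c \<le> Ln_var p S n"
      unfolding c_def S'_def using n \<open>\<delta> > 0\<close>
      by (intro Ln_var_ge[where S = S and \<delta> = "\<delta> / 2", OF _ ab pb sym \<epsilon>]) simp_all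
  qed
  moreover have "c > 0"
  proof -
    have "1 + pmf p a / pmf p b > 0" using pb by (simp add: add_pos_nonneg)
    then show ?thesis
      using \<open>\<delta> > 0\<close> \<epsilon> unfolding c_def by (intro divide_pos_pos mult_pos_pos) auto
  qed
  ultimately show ?thesis by blast
qed

theorem mainTheorem3:
  fixes p :: "'a::finite pmf"
    and S :: "'a option \<Rightarrow> 'a option \<Rightarrow> real"
    and a b :: 'a
  assumes "a \<noteq> b"
    and "pmf p a > 0" and "pmf p b > 0"
    and "\<And>u v. S u v = S v u"
    and "\<exists>\<epsilon>>0. lambda p S - lambda p (\<lambda>u v. S u v - \<epsilon> * T_fun S a b u v) > 0"
  shows "(\<lambda>n. Ln_var p S n) \<in> \<Theta>(\<lambda>n. real n)"
proof -
  obtain \<epsilon> where "\<epsilon> > 0" and "lambda p S - lambda p (\<lambda>u v. S u v - \<epsilon> * T_fun S a b u v) > 0"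
    using assms(5) by blast
  then obtain c where "c > 0" and lower: "eventually (\<lambda>n. real n * c \<le> Ln_var p S n) sequentially"
    using Ln_var_eventually_ge[where S = S, OF assms(1,3,4)] by blast
  obtain M where M: "\<And>u v. \<bar>S u v\<bar> \<le> M" using finite_score_bounded by blast
  have upper: "Ln_var p S n \<le> real n * (32 * M\<^sup>2)" for n
    by (rule Ln_var_le) (use M in auto)
  show ?thesis
  proof (rule bigthetaI'[of c "32 * M\<^sup>2 + 1"])
    show "eventually (\<lambda>n. c * norm (real n) \<le> norm (Ln_var p S n)
        \<and> norm (Ln_var p S n) \<le> (32 * M\<^sup>2 + 1) * norm (real n)) at_top"
    proof (rule eventually_mono[OF lower])
      fix n assume "real n * c \<le> Ln_var p S n"
      moreover have "0 \<le> real n * c" using \<open>c > 0\<close> by simp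
      ultimately show "c * norm (real n) \<le> norm (Ln_var p S n)
          \<and> norm (Ln_var p S n) \<le> (32 * M\<^sup>2 + 1) * norm (real n)"
        using upper[of n] by (simp add: algebra_simps)
    qed
  qed (use \<open>c > 0\<close> in \<open>auto simp: add_nonneg_pos\<close>)
qed

end
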